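(* Let $C\subseteq\mathbb{F}_q^n$ be an $[n,k]$ linear code with $n-k\ge2$ and parity-check matrix $H\in\mathbb{F}_q^{(n-k)\times n}$ of rank $n-k$. Let $u\ge1$ satisfy $\frac{n-k-1}{q^u-1}<1$, and let $p\in\left(\frac{n-k-1}{q^u-1},1\right)$. Put $m=\lceil (n-k-1)/p\rceil$. Then $n-k\le m\le q^u-1$, there exists an MDS code with parameters $[m,n-k,m-(n-k)+1]$ over $\mathbb{F}_{q^u}$, and if $\bar G\in\mathbb{F}_{q^u}^{(n-k)\times m}$ is a generator matrix of any such code, then the list $S$ of the $m$ rows of $\bar G^TH$ is a test set for $C$ with designed probability $\frac{n-k-1}{m}\le p$; in particular $S$ is a test set for $C$ with designed probability $p$.
   Context: $\mathbb{F}_{q^u}$ is the degree-$u$ extension of $\mathbb{F}_q$; $(\mathbf{x},\mathbf{y})=\sum_{j=1}^n x_jy_j$. A test set with designed probability $p\in(0,1)$ for $C$ is a finite nonempty collection $S$ of vectors in $\mathbb{F}_{q^u}^n$ (counted with multiplicity) such that for every $\mathbf{x}\in\mathbb{F}_q^n$: (1) $\mathbf{x}\in C$ iff $(\mathbf{x},\mathbf{y})=0$ for all $\mathbf{y}\in S$; (2) if some $\mathbf{y}\in S$ has $(\mathbf{x},\mathbf{y})\ne0$, then $\#\{\mathbf{y}\in S:(\mathbf{x},\mathbf{y})\ne0\}\ge(1-p)\#S$. *)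

theory Defs
  imports "Jordan_Normal_Form.DL_Rank"
begin

text \<open>The field F_q is a finite field type 'a; the extension F_(q^u) is a finite field
  type 'b with CARD('b) = CARD('a)^u together with a field embedding phi.\<close>

definition pairing :: "('a \<Rightarrow> 'b::comm_ring_1) \<Rightarrow> 'a vec \<Rightarrow> 'b vec \<Rightarrow> 'b" where
  "pairing phi x y = (\<Sum>j<dim_vec x. phi (x $ j) * y $ j)"

definition code_of_parity_check :: "'a::field mat \<Rightarrow> 'a vec set" where
  "code_of_parity_check H = {x \<in> carrier_vec (dim_col H). H *\<^sub>v x = 0\<^sub>v (dim_row H)}"

definition code_of_generator :: "'b::field mat \<Rightarrow> 'b vec set" where
  "code_of_generator G = {w. \<exists>c \<in> carrier_vec (dim_row G). w = transpose_mat G *\<^sub>v c}"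

definition hamming_weight :: "'b::zero vec \<Rightarrow> nat" where
  "hamming_weight c = card {i. i < dim_vec c \<and> c $ i \<noteq> 0}"

definition min_distance :: "nat \<Rightarrow> 'b::zero vec set \<Rightarrow> nat" where
  "min_distance m D = Inf (hamming_weight ` (D - {0\<^sub>v m}))"

definition is_generator_matrix :: "'b::{field} mat \<Rightarrow> nat \<Rightarrow> nat \<Rightarrow> nat \<Rightarrow> bool" where
  "is_generator_matrix G m r d \<longleftrightarrow>
     G \<in> carrier_mat r m \<and> vec_space.rank r G = r \<and>
     min_distance m (code_of_generator G) = d"

text \<open>Test set with designed probability p for the code C of length n (S a list, i.e.
  counted with multiplicity).\<close>
definition is_test_set :: "('a \<Rightarrow> 'b::comm_ring_1) \<Rightarrow> nat \<Rightarrow> 'a vec set \<Rightarrow> 'b vec list \<Rightarrow> real \<Rightarrow> bool" where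
  "is_test_set phi n C S p \<longleftrightarrow>
     S \<noteq> [] \<and> set S \<subseteq> carrier_vec n \<and>
     (\<forall>x \<in> carrier_vec n.
        (x \<in> C \<longleftrightarrow> (\<forall>y \<in> set S. pairing phi x y = 0)) \<and>
        ((\<exists>y \<in> set S. pairing phi x y \<noteq> 0) \<longrightarrow>
           real (length (filter (\<lambda>y. pairing phi x y \<noteq> 0) S)) \<ge> (1 - p) * real (length S)))"

end

theory Submission
  imports Defs "HOL-Computational_Algebra.Polynomial"
begin

(* Write r = n - k. For a generator matrix G of an [m, r] code over F_{q^u}, the pairing of
   x with the i-th row of G^T H is the i-th coordinate of the codeword G^T (H x). As G has full
   row rank, this codeword vanishes iff the syndrome H x does, i.e. iff x is in C; otherwise
   its weight is at least the minimum distance, which for an MDS code is m - r + 1, so at most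
   a fraction (r - 1)/m of the tests miss x. Reed-Solomon codes provide MDS codes of every
   length m <= q^u, and m = ceil((r - 1)/p) is chosen so that (r - 1)/m <= p. *)

section \<open>Matrices of full row rank\<close>

lemma (in vec_space) obtain_maximal_indpt_cols:
  obtains S where "maximal S (\<lambda>T. T \<subseteq> set (cols A) \<and> lin_indpt T)"
    and "S \<subseteq> set (cols A)" and "lin_indpt S"
proof -
  obtain S where S: "maximal S (\<lambda>T. T \<subseteq> set (cols A) \<and> lin_indpt T)"
    using maximal_exists[of "\<lambda>T. T \<subseteq> set (cols A) \<and> lin_indpt T" "card (set (cols A))" "{}"]
    by (meson List.finite_set card_mono empty_iff empty_subsetI finite_lin_indpt2 rev_finite_subset)
  moreover have "S \<subseteq> set (cols A) \<and> lin_indpt S"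
    using S unfolding maximal_def by (rule conjunct1)
  ultimately show thesis using that by blast
qed

lemma (in vec_space) rank_le_nr:
  assumes A: "A \<in> carrier_mat n nc"
  shows "rank A \<le> n"
proof -
  obtain S where S: "maximal S (\<lambda>T. T \<subseteq> set (cols A) \<and> lin_indpt T)"
    and "S \<subseteq> set (cols A)" and "lin_indpt S"
    by (rule obtain_maximal_indpt_cols)
  moreover have "set (cols A) \<subseteq> carrier_vec n" using A cols_dim by blast
  ultimately have "card S \<le> dim" using li_le_dim(2)[OF fin_dim] by blast
  then show ?thesis using rank_card_indpt[OF A S] dim_is_n by simp
qed

lemma (in vec_space) rank_mono_cols:
  assumes A: "A \<in> carrier_mat n nc" and B: "B \<in> carrier_mat n nc'"
    and sub: "set (cols A) \<subseteq> set (cols B)"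
  shows "rank A \<le> rank B"
proof -
  obtain S where S: "maximal S (\<lambda>T. T \<subseteq> set (cols A) \<and> lin_indpt T)"
    and "S \<subseteq> set (cols A)" and "lin_indpt S"
    by (rule obtain_maximal_indpt_cols)
  with sub show ?thesis using rank_card_indpt[OF A S] rank_ge_card_indpt[OF B] by simp
qed

lemma (in vec_space) full_rank_span_cols:
  assumes A: "A \<in> carrier_mat n nc" and rk: "rank A = n"
  shows "span (set (cols A)) = carrier_vec n"
proof -
  obtain S where S: "maximal S (\<lambda>T. T \<subseteq> set (cols A) \<and> lin_indpt T)"
    and S_cols: "S \<subseteq> set (cols A)" and indpt: "lin_indpt S"
    by (rule obtain_maximal_indpt_cols)
  have cols: "set (cols A) \<subseteq> carrier_vec n" using A cols_dim by blast
  have "basis S"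
  proof (rule dim_li_is_basis[OF fin_dim _ _ indpt])
    show "finite S" using S_cols List.finite_set by (rule finite_subset)
    show "S \<subseteq> carrier_vec n" using S_cols cols by (rule subset_trans)
    show "dim \<le> card S" using rank_card_indpt[OF A S] rk dim_is_n by simp
  qed
  then have "carrier_vec n = span S" unfolding basis_def by simp
  also have "\<dots> \<subseteq> span (set (cols A))" using S_cols by (rule span_is_monotone)
  finally have "carrier_vec n \<subseteq> span (set (cols A))" .
  moreover have "span (set (cols A)) \<subseteq> carrier_vec n" using span_is_subset2[OF cols] by simp
  ultimately show ?thesis by blast
qed

lemma (in vec_space) full_rank_transpose_kernel:
  assumes A: "A \<in> carrier_mat n nc" and rk: "rank A = n"
    and w: "w \<in> carrier_vec n" and Aw: "transpose_mat A *\<^sub>v w = 0\<^sub>v nc"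
  shows "w = 0\<^sub>v n"
proof (rule eq_vecI)
  have cols: "set (cols A) \<subseteq> carrier_vec n" using A cols_dim by blast
  have orth: "u \<bullet> w = 0" if u: "u \<in> set (cols A)" for u
  proof -
    obtain i where "i < nc" "u = col A i" using u A by (auto simp: in_set_conv_nth)
    then have "u \<bullet> w = (transpose_mat A *\<^sub>v w) $ i" using A by simp
    then show ?thesis using Aw \<open>i < nc\<close> by simp
  qed
  fix j assume "j < dim_vec (0\<^sub>v n)"
  then have j: "j < n" by simp
  have "unit_vec n j \<in> span (set (cols A))" using full_rank_span_cols[OF A rk] j by simp
  then obtain a U where U: "unit_vec n j = lincomb a U" "finite U" "U \<subseteq> set (cols A)"
    using in_spanE by blast
  have "w $ j = unit_vec n j \<bullet> w" using w j by simp
  also have "\<dots> = (\<Sum>u\<in>U. (a u \<cdot>\<^sub>v u) \<bullet> w)"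
    unfolding U(1) lincomb_def by (rule finsum_scalar_prod_sum) (use U cols w in auto)
  also have "\<dots> = 0"
  proof (intro sum.neutral ballI)
    fix u assume "u \<in> U"
    then have "u \<in> carrier_vec n" "u \<bullet> w = 0" using U(3) cols orth by auto
    then show "(a u \<cdot>\<^sub>v u) \<bullet> w = 0" using w by simp
  qed
  finally show "w $ j = 0\<^sub>v n $ j" using j by simp
qed (use w in simp)

definition poly_of_vec :: "'a::comm_semiring_1 vec \<Rightarrow> 'a poly" where
  "poly_of_vec c = (\<Sum>j<dim_vec c. monom (c $ j) j)"

lemma coeff_poly_of_vec: "coeff (poly_of_vec c) i = (if i < dim_vec c then c $ i else 0)"
  unfolding poly_of_vec_def coeff_sum by (simp add: coeff_monom)

lemma poly_poly_of_vec: "poly (poly_of_vec c) x = (\<Sum>j<dim_vec c. c $ j * x ^ j)"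
  unfolding poly_of_vec_def poly_sum poly_monom ..

lemma poly_of_vec_eq_0_iff:
  assumes "c \<in> carrier_vec r"
  shows "poly_of_vec c = 0 \<longleftrightarrow> c = 0\<^sub>v r"
proof
  assume "poly_of_vec c = 0"
  then have "c $ i = 0" if "i < r" for i
    using coeff_poly_of_vec[of c i] that assms by simp
  then show "c = 0\<^sub>v r" using assms by (intro eq_vecI) auto
next
  assume "c = 0\<^sub>v r"
  then show "poly_of_vec c = 0" by (simp add: poly_of_vec_def)
qed

lemma degree_poly_of_vec_less:
  assumes "poly_of_vec c \<noteq> 0"
  shows "degree (poly_of_vec c) < dim_vec c"
proof -
  have "dim_vec c \<noteq> 0" using assms by (auto simp: poly_of_vec_def)
  moreover have "degree (poly_of_vec c) \<le> dim_vec c - 1"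
    by (rule degree_le) (auto simp: coeff_poly_of_vec)
  ultimately show ?thesis by linarith
qed

lemma poly_of_vec_coeff:
  assumes "degree f < r"
  shows "poly_of_vec (vec r (coeff f)) = f"
  by (rule poly_eqI) (use assms in \<open>auto simp: coeff_poly_of_vec coeff_eq_0\<close>)

lemma card_root_indices_le_degree:
  fixes f :: "'a::idom poly"
  assumes inj: "inj_on a {..<m}" and f: "f \<noteq> 0"
  shows "card {i. i < m \<and> poly f (a i) = 0} \<le> degree f"
proof -
  have "card {i. i < m \<and> poly f (a i) = 0} = card (a ` {i. i < m \<and> poly f (a i) = 0})"
    by (rule card_image[symmetric], rule inj_on_subset[OF inj]) auto
  also have "\<dots> \<le> card {x. poly f x = 0}"
    by (rule card_mono[OF poly_roots_finite[OF f]]) auto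
  also have "\<dots> \<le> degree f" using card_poly_roots_bound[OF f] by simp
  finally show ?thesis .
qed

lemma hamming_weight_vec: "hamming_weight (vec m g) = m - card {i. i < m \<and> g i = 0}"
proof -
  have "hamming_weight (vec m g) = card ({..<m} - {i. i < m \<and> g i = 0})"
    unfolding hamming_weight_def by (rule arg_cong[where f = card]) auto
  also have "\<dots> = m - card {i. i < m \<and> g i = 0}" by (subst card_Diff_subset) auto
  finally show ?thesis .
qed

lemma encode_mem_code_of_generator:
  "c \<in> carrier_vec (dim_row G) \<Longrightarrow> transpose_mat G *\<^sub>v c \<in> code_of_generator G"
  unfolding code_of_generator_def by blast

lemma min_distance_le_hamming_weight:
  assumes "w \<in> D" and "w \<noteq> 0\<^sub>v m"
  shows "min_distance m D \<le> hamming_weight w"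
  unfolding min_distance_def using assms by (intro cInf_lower) auto

lemma min_distance_eqI:
  assumes "w \<in> D" and "w \<noteq> 0\<^sub>v m" and "hamming_weight w = d"
    and "\<And>v. v \<in> D \<Longrightarrow> v \<noteq> 0\<^sub>v m \<Longrightarrow> d \<le> hamming_weight v"
  shows "min_distance m D = d"
  unfolding min_distance_def using assms by (intro cInf_eq_minimum) auto

section \<open>Reed-Solomon codes\<close>

definition rs_generator_mat :: "(nat \<Rightarrow> 'a::comm_semiring_1) \<Rightarrow> nat \<Rightarrow> nat \<Rightarrow> 'a mat" where
  "rs_generator_mat a r m = mat r m (\<lambda>(j, i). a i ^ j)"

lemma rs_generator_mat_dims [simp]:
  "dim_row (rs_generator_mat a r m) = r" "dim_col (rs_generator_mat a r m) = m"
  by (simp_all add: rs_generator_mat_def)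

lemma rs_generator_mat_carrier [simp]: "rs_generator_mat a r m \<in> carrier_mat r m"
  by (rule carrier_matI) simp_all

lemma rs_encode:
  assumes c: "c \<in> carrier_vec r"
  shows "transpose_mat (rs_generator_mat a r m) *\<^sub>v c = vec m (\<lambda>i. poly (poly_of_vec c) (a i))"
proof (rule eq_vecI)
  fix i assume "i < dim_vec (vec m (\<lambda>i. poly (poly_of_vec c) (a i)))"
  then have i: "i < m" by simp
  have "(transpose_mat (rs_generator_mat a r m) *\<^sub>v c) $ i = (\<Sum>j<r. a i ^ j * c $ j)"
    using c i by (simp add: rs_generator_mat_def scalar_prod_def lessThan_atLeast0)
  also have "\<dots> = poly (poly_of_vec c) (a i)"
    using c by (simp add: poly_poly_of_vec mult.commute)
  finally show "(transpose_mat (rs_generator_mat a r m) *\<^sub>v c) $ i = vec m (\<lambda>i. poly (poly_of_vec c) (a i)) $ i"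
    using i by simp
qed simp

lemma rs_encode_eq_0_iff:
  fixes a :: "nat \<Rightarrow> 'a::idom"
  assumes inj: "inj_on a {..<m}" and rm: "r \<le> m" and c: "c \<in> carrier_vec r"
  shows "transpose_mat (rs_generator_mat a r m) *\<^sub>v c = 0\<^sub>v m \<longleftrightarrow> c = 0\<^sub>v r"
proof
  assume enc0: "transpose_mat (rs_generator_mat a r m) *\<^sub>v c = 0\<^sub>v m"
  show "c = 0\<^sub>v r"
  proof (rule ccontr)
    assume "c \<noteq> 0\<^sub>v r"
    then have f: "poly_of_vec c \<noteq> 0" using poly_of_vec_eq_0_iff[OF c] by simp
    have "{i. i < m \<and> poly (poly_of_vec c) (a i) = 0} = {..<m}"
      using enc0 unfolding rs_encode[OF c] vec_eq_iff by auto
    then have "m \<le> degree (poly_of_vec c)" using card_root_indices_le_degree[OF inj f] by simp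
    then show False using degree_poly_of_vec_less[OF f] c rm by simp
  qed
next
  assume "c = 0\<^sub>v r"
  then have "poly_of_vec c = 0" using poly_of_vec_eq_0_iff[OF c] by simp
  then show "transpose_mat (rs_generator_mat a r m) *\<^sub>v c = 0\<^sub>v m"
    unfolding rs_encode[OF c] by (intro eq_vecI) auto
qed

lemma rank_rs_generator_mat:
  fixes a :: "nat \<Rightarrow> 'a::field"
  assumes inj: "inj_on a {..<m}" and rm: "r \<le> m"
  shows "vec_space.rank r (rs_generator_mat a r m) = r"
proof -
  let ?A = "rs_generator_mat a r r" and ?G = "rs_generator_mat a r m"
  have A: "?A \<in> carrier_mat r r" by simp
  have "det (transpose_mat ?A) \<noteq> 0"
  proof
    assume "det (transpose_mat ?A) = 0"
    then obtain c where "c \<in> carrier_vec r" "c \<noteq> 0\<^sub>v r" "transpose_mat ?A *\<^sub>v c = 0\<^sub>v r"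
      using det_0_iff_vec_prod_zero_field[of "transpose_mat ?A" r] by auto
    moreover have "inj_on a {..<r}" using inj by (rule inj_on_subset) (use rm in auto)
    ultimately show False using rs_encode_eq_0_iff[of a r r c] by simp
  qed
  then have "vec_space.rank r ?A = r"
    using vec_space.low_rank_det_zero[OF A] det_transpose[OF A] by simp
  moreover have "set (cols ?A) \<subseteq> set (cols ?G)"
  proof
    fix v assume "v \<in> set (cols ?A)"
    then obtain i where i: "i < r" "v = col ?A i" by (auto simp: in_set_conv_nth)
    then have "v = col ?G i" using rm by (intro eq_vecI) (auto simp: rs_generator_mat_def)
    then show "v \<in> set (cols ?G)" using i rm by (simp add: cols_def)
  qed
  ultimately have "r \<le> vec_space.rank r ?G"
    using vec_space.rank_mono_cols[OF A rs_generator_mat_carrier] by simp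
  moreover have "vec_space.rank r ?G \<le> r" by (rule vec_space.rank_le_nr[OF rs_generator_mat_carrier])
  ultimately show ?thesis by simp
qed

lemma hamming_weight_rs_encode:
  fixes a :: "nat \<Rightarrow> 'a::idom"
  assumes inj: "inj_on a {..<m}" and rm: "r \<le> m" and c: "c \<in> carrier_vec r" "c \<noteq> 0\<^sub>v r"
  shows "m - r + 1 \<le> hamming_weight (transpose_mat (rs_generator_mat a r m) *\<^sub>v c)"
proof -
  have f: "poly_of_vec c \<noteq> 0" using poly_of_vec_eq_0_iff[OF c(1)] c(2) by simp
  have "card {i. i < m \<and> poly (poly_of_vec c) (a i) = 0} < r"
    using card_root_indices_le_degree[OF inj f] degree_poly_of_vec_less[OF f] c(1) by simp
  then show ?thesis unfolding rs_encode[OF c(1)] hamming_weight_vec using rm by linarith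
qed

lemma rs_codeword_of_min_weight:
  fixes a :: "nat \<Rightarrow> 'a::field"
  assumes inj: "inj_on a {..<m}" and r: "1 \<le> r" "r \<le> m"
  obtains w where "w \<in> code_of_generator (rs_generator_mat a r m)" and "w \<noteq> 0\<^sub>v m"
    and "hamming_weight w = m - r + 1"
proof -
  define f where "f = (\<Prod>l<r-1. [:- a l, 1:])"
  have "degree f \<le> r - 1"
    unfolding f_def using degree_prod_sum_le[of "{..<r-1}" "\<lambda>l. [:- a l, 1:]"] by simp
  then have enc: "transpose_mat (rs_generator_mat a r m) *\<^sub>v vec r (coeff f) = vec m (\<lambda>i. poly f (a i))"
    using rs_encode[of "vec r (coeff f)" r a m] poly_of_vec_coeff[of f r] r by simp
  have roots: "poly f (a i) = 0 \<longleftrightarrow> i < r - 1" if i: "i < m" for i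
  proof -
    have "poly f (a i) = 0 \<longleftrightarrow> (\<exists>l\<in>{..<r - 1}. a i = a l)"
      unfolding f_def poly_prod by (simp add: prod_zero_iff)
    also have "\<dots> \<longleftrightarrow> i < r - 1"
    proof
      assume "\<exists>l\<in>{..<r - 1}. a i = a l"
      then obtain l where l: "l < r - 1" "a i = a l" by blast
      then have "l < m" using r by linarith
      with l i inj show "i < r - 1" by (metis inj_onD lessThan_iff)
    qed auto
    finally show ?thesis .
  qed
  show thesis
  proof
    show "vec m (\<lambda>i. poly f (a i)) \<in> code_of_generator (rs_generator_mat a r m)"
      unfolding enc[symmetric] by (rule encode_mem_code_of_generator) simp
    show "vec m (\<lambda>i. poly f (a i)) \<noteq> 0\<^sub>v m"
    proof
      assume zero: "vec m (\<lambda>i. poly f (a i)) = 0\<^sub>v m"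
      have "r - 1 < m" using r by linarith
      then have "poly f (a (r - 1)) = vec m (\<lambda>i. poly f (a i)) $ (r - 1)" by simp
      also have "\<dots> = 0" unfolding zero using \<open>r - 1 < m\<close> by simp
      finally show False using roots[OF \<open>r - 1 < m\<close>] by simp
    qed
    have "{i. i < m \<and> poly f (a i) = 0} = {..<r - 1}" using r by (auto simp: roots)
    then show "hamming_weight (vec m (\<lambda>i. poly f (a i))) = m - r + 1"
      unfolding hamming_weight_vec using r by simp
  qed
qed

lemma min_distance_rs_generator_mat:
  fixes a :: "nat \<Rightarrow> 'a::field"
  assumes inj: "inj_on a {..<m}" and r: "1 \<le> r" "r \<le> m"
  shows "min_distance m (code_of_generator (rs_generator_mat a r m)) = m - r + 1"
proof -
  obtain w where "w \<in> code_of_generator (rs_generator_mat a r m)" "w \<noteq> 0\<^sub>v m"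
    "hamming_weight w = m - r + 1"
    using rs_codeword_of_min_weight[OF inj r] .
  then show ?thesis
  proof (rule min_distance_eqI)
    fix v assume "v \<in> code_of_generator (rs_generator_mat a r m)" "v \<noteq> 0\<^sub>v m"
    then obtain c where c: "c \<in> carrier_vec r" and v: "v = transpose_mat (rs_generator_mat a r m) *\<^sub>v c"
      unfolding code_of_generator_def by auto
    with \<open>v \<noteq> 0\<^sub>v m\<close> have "c \<noteq> 0\<^sub>v r" using rs_encode_eq_0_iff[OF inj r(2) c] by simp
    then show "m - r + 1 \<le> hamming_weight v" unfolding v by (rule hamming_weight_rs_encode[OF inj r(2) c])
  qed
qed

lemma ex_mds_generator_matrix:
  assumes r: "1 \<le> r" "r \<le> m" and m: "m \<le> card (UNIV :: 'a set)"
  shows "\<exists>G :: 'a::{finite,field} mat. is_generator_matrix G m r (m - r + 1)"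
proof -
  obtain a :: "nat \<Rightarrow> 'a" where "bij_betw a {0..<card (UNIV :: 'a set)} UNIV"
    using ex_bij_betw_nat_finite[OF finite_UNIV] by blast
  then have inj: "inj_on a {..<m}"
    by (rule inj_on_subset[OF bij_betw_imp_inj_on]) (use m in auto)
  have "is_generator_matrix (rs_generator_mat a r m) m r (m - r + 1)"
    using rank_rs_generator_mat[OF inj r(2)] min_distance_rs_generator_mat[OF inj r]
    unfolding is_generator_matrix_def by simp
  then show ?thesis by blast
qed

section \<open>Test sets\<close>

lemma pairing_eq_scalar_prod:
  assumes "x \<in> carrier_vec n" and "y \<in> carrier_vec n"
  shows "pairing phi x y = y \<bullet> map_vec phi x"
  using assms unfolding pairing_def scalar_prod_def
  by (auto simp: lessThan_atLeast0 mult.commute intro!: sum.cong)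

lemma (in comm_ring_hom) pairing_row_mult_map_mat:
  assumes B: "B \<in> carrier_mat m r" and H: "H \<in> carrier_mat r n"
    and x: "x \<in> carrier_vec n" and i: "i < m"
  shows "pairing hom x (row (B * map_mat hom H) i) = (B *\<^sub>v map_vec hom (H *\<^sub>v x)) $ i"
proof -
  have "pairing hom x (row (B * map_mat hom H) i) = row (B * map_mat hom H) i \<bullet> map_vec hom x"
    using B H x i by (intro pairing_eq_scalar_prod) auto
  also have "\<dots> = ((B * map_mat hom H) *\<^sub>v map_vec hom x) $ i" using B H i by simp
  also have "(B * map_mat hom H) *\<^sub>v map_vec hom x = B *\<^sub>v (map_mat hom H *\<^sub>v map_vec hom x)"
    using B H x by (intro assoc_mult_mat_vec) auto
  also have "map_mat hom H *\<^sub>v map_vec hom x = map_vec hom (H *\<^sub>v x)"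
    using mult_mat_vec_hom[OF H x] by simp
  finally show ?thesis .
qed

lemma is_test_set_rowsI:
  fixes phi :: "'a \<Rightarrow> 'b::comm_ring_1"
  assumes M: "M \<in> carrier_mat m n" and m: "0 < m"
    and s_carrier: "\<And>x. x \<in> carrier_vec n \<Longrightarrow> s x \<in> carrier_vec m"
    and s_pairing: "\<And>x i. x \<in> carrier_vec n \<Longrightarrow> i < m \<Longrightarrow> pairing phi x (row M i) = s x $ i"
    and s_code: "\<And>x. x \<in> carrier_vec n \<Longrightarrow> x \<in> C \<longleftrightarrow> s x = 0\<^sub>v m"
    and s_weight: "\<And>x. x \<in> carrier_vec n \<Longrightarrow> s x \<noteq> 0\<^sub>v m \<Longrightarrow>
      (1 - p) * real m \<le> real (hamming_weight (s x))"
  shows "is_test_set phi n C (rows M) p"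
  unfolding is_test_set_def
proof (intro conjI ballI impI)
  have len: "length (rows M) = m" using M by simp
  then show "rows M \<noteq> []" using m by (metis less_irrefl list.size(3))
  show "set (rows M) \<subseteq> carrier_vec n" using M by (auto simp: in_set_conv_nth)
  fix x :: "'a vec" assume x: "x \<in> carrier_vec n"
  have "set (rows M) = row M ` {..<m}" using M by (auto simp: rows_def)
  then have vanish: "(\<forall>y\<in>set (rows M). pairing phi x y = 0) \<longleftrightarrow> s x = 0\<^sub>v m"
    using s_carrier[OF x] s_pairing[OF x] by (auto simp: vec_eq_iff)
  then show "x \<in> C \<longleftrightarrow> (\<forall>y\<in>set (rows M). pairing phi x y = 0)" using s_code[OF x] by simp
  assume "\<exists>y\<in>set (rows M). pairing phi x y \<noteq> 0"
  then have "s x \<noteq> 0\<^sub>v m" using vanish by blast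
  moreover have "length (filter (\<lambda>y. pairing phi x y \<noteq> 0) (rows M)) = hamming_weight (s x)"
    unfolding length_filter_conv_card hamming_weight_def len
    using M s_carrier[OF x] s_pairing[OF x] by (intro arg_cong[where f = card]) auto
  ultimately show "(1 - p) * real (length (rows M)) \<le> real (length (filter (\<lambda>y. pairing phi x y \<noteq> 0) (rows M)))"
    using s_weight[OF x] len by simp
qed


lemma (in field_hom) is_test_set_of_generator_mat:
  assumes H: "H \<in> carrier_mat r n" and G: "G \<in> carrier_mat r m"
    and rk: "vec_space.rank r G = r" and m: "0 < m"
    and p: "(1 - p) * real m \<le> real (min_distance m (code_of_generator G))"
  shows "is_test_set hom n (code_of_parity_check H) (rows (transpose_mat G * map_mat hom H)) p"
proof (rule is_test_set_rowsI[where s = "\<lambda>x. transpose_mat G *\<^sub>v map_vec hom (H *\<^sub>v x)"])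
  show "transpose_mat G * map_mat hom H \<in> carrier_mat m n" using G H by simp
  show "0 < m" by (rule m)
  fix x :: "'a vec" assume x: "x \<in> carrier_vec n"
  have Hx: "map_vec hom (H *\<^sub>v x) \<in> carrier_vec r" using H x by simp
  show "transpose_mat G *\<^sub>v map_vec hom (H *\<^sub>v x) \<in> carrier_vec m"
    using G by (intro carrier_vecI) simp
  show "pairing hom x (row (transpose_mat G * map_mat hom H) i)
      = (transpose_mat G *\<^sub>v map_vec hom (H *\<^sub>v x)) $ i" if "i < m" for i
    using G H x that by (intro pairing_row_mult_map_mat) auto
  have "x \<in> code_of_parity_check H \<longleftrightarrow> map_vec hom (H *\<^sub>v x) = 0\<^sub>v r"
    using H x unfolding code_of_parity_check_def by simp
  also have "\<dots> \<longleftrightarrow> transpose_mat G *\<^sub>v map_vec hom (H *\<^sub>v x) = 0\<^sub>v m"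
    using vec_space.full_rank_transpose_kernel[OF G rk Hx] G
    by (auto intro!: eq_vecI simp: vec_hom_zero)
  finally show "x \<in> code_of_parity_check H \<longleftrightarrow> transpose_mat G *\<^sub>v map_vec hom (H *\<^sub>v x) = 0\<^sub>v m" .
  assume "transpose_mat G *\<^sub>v map_vec hom (H *\<^sub>v x) \<noteq> 0\<^sub>v m"
  moreover have "transpose_mat G *\<^sub>v map_vec hom (H *\<^sub>v x) \<in> code_of_generator G"
    using G Hx by (intro encode_mem_code_of_generator) simp
  ultimately have "min_distance m (code_of_generator G) \<le> hamming_weight (transpose_mat G *\<^sub>v map_vec hom (H *\<^sub>v x))"
    by (intro min_distance_le_hamming_weight)
  then show "(1 - p) * real m \<le> real (hamming_weight (transpose_mat G *\<^sub>v map_vec hom (H *\<^sub>v x)))"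
    using p by linarith
qed

lemma (in field_hom) is_test_set_of_mds:
  assumes H: "H \<in> carrier_mat r n" and G: "is_generator_matrix G m r (m - r + 1)"
    and r: "1 \<le> r" "r \<le> m" and p: "real (r - 1) / real m \<le> p"
  shows "is_test_set hom n (code_of_parity_check H) (rows (transpose_mat G * map_mat hom H)) p"
proof (rule is_test_set_of_generator_mat[OF H])
  show "G \<in> carrier_mat r m" "vec_space.rank r G = r" using G by (auto simp: is_generator_matrix_def)
  show "0 < m" using r by simp
  have "(1 - p) * real m \<le> real m - real (r - 1)"
    using p \<open>0 < m\<close> by (simp add: field_simps)
  also have "\<dots> = real (min_distance m (code_of_generator G))"
    using G r by (simp add: is_generator_matrix_def)
  finally show "(1 - p) * real m \<le> real (min_distance m (code_of_generator G))" .
qed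

lemma designed_length_bounds:
  fixes r Q :: nat and p :: real
  assumes r: "2 \<le> r" and Q: "2 \<le> Q"
    and p_lo: "real (r - 1) / (real Q - 1) < p" and p_hi: "p < 1"
  defines "m \<equiv> nat \<lceil>real (r - 1) / p\<rceil>"
  shows "r \<le> m" and "m \<le> Q - 1" and "real (r - 1) / real m \<le> p"
proof -
  have r1: "1 \<le> real (r - 1)" and Q1: "0 < real Q - 1" using r Q by linarith+
  then have "0 < real (r - 1) / (real Q - 1)" by simp
  with p_lo have p0: "0 < p" by linarith
  define x where "x = real (r - 1) / p"
  have "real (r - 1) * p < real (r - 1) * 1"
    using p_hi r1 by (intro mult_strict_left_mono) auto
  then have x_lo: "real (r - 1) < x"
    unfolding x_def pos_less_divide_eq[OF p0] by linarith
  have "real (r - 1) < p * (real Q - 1)" using p_lo by (simp only: pos_divide_less_eq[OF Q1])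
  then have x_hi: "x < real Q - 1"
    unfolding x_def pos_divide_less_eq[OF p0] by (simp add: mult.commute)
  have x_le_m: "x \<le> real m" using x_lo r1 unfolding m_def x_def[symmetric] by linarith
  show "r \<le> m" using x_lo x_le_m r by linarith
  show "m \<le> Q - 1" using x_hi Q unfolding m_def x_def[symmetric] by linarith
  have "real (r - 1) \<le> p * real m"
    using x_le_m unfolding x_def pos_divide_le_eq[OF p0] by (simp add: mult.commute)
  then show "real (r - 1) / real m \<le> p"
    using x_lo r1 x_le_m by (simp add: pos_divide_le_eq)
qed

theorem mainTheorem4:
  fixes phi :: "'a::{finite,field} \<Rightarrow> 'b::{finite,field}"
    and n k u :: nat and H :: "'a mat" and p :: real
  assumes ext: "field_hom phi" and card_ext: "card (UNIV :: 'b set) = card (UNIV :: 'a set) ^ u"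
    and u: "u \<ge> 1"
    and nk: "k + 2 \<le> n"
    and H: "H \<in> carrier_mat (n - k) n" and rankH: "vec_space.rank (n - k) H = n - k"
    and ratio: "real (n - k - 1) / (real (card (UNIV :: 'a set) ^ u) - 1) < 1"
    and p_lo: "real (n - k - 1) / (real (card (UNIV :: 'a set) ^ u) - 1) < p" and p_hi: "p < 1"
  shows "let m = nat \<lceil>real (n - k - 1) / p\<rceil>; C = code_of_parity_check H in
     n - k \<le> m \<and> m \<le> card (UNIV :: 'a set) ^ u - 1 \<and>
     (\<exists>G :: 'b mat. is_generator_matrix G m (n - k) (m - (n - k) + 1)) \<and>
     (\<forall>G :: 'b mat. is_generator_matrix G m (n - k) (m - (n - k) + 1) \<longrightarrow>
        (let S = rows (transpose_mat G * map_mat phi H) in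
          is_test_set phi n C S (real (n - k - 1) / real m) \<and>
          real (n - k - 1) / real m \<le> p \<and>
          is_test_set phi n C S p))"
proof -
  define r where "r = n - k"
  define Q where "Q = card (UNIV :: 'a set) ^ u"
  define m where "m = nat \<lceil>real (r - 1) / p\<rceil>"
  have r: "2 \<le> r" using nk unfolding r_def by linarith
  have "card {0, 1 :: 'b} \<le> card (UNIV :: 'b set)" by (rule card_mono) simp_all
  then have Q: "2 \<le> Q" using card_ext unfolding Q_def by simp
  have m: "r \<le> m" "m \<le> Q - 1" "real (r - 1) / real m \<le> p"
    using designed_length_bounds[OF r Q, of p] p_lo p_hi unfolding r_def Q_def m_def by simp_all
  have "m \<le> card (UNIV :: 'b set)" using m(2) card_ext unfolding Q_def by simp
  then have mds: "\<exists>G :: 'b mat. is_generator_matrix G m r (m - r + 1)"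
    using m(1) r by (intro ex_mds_generator_matrix) simp_all
  have test: "is_test_set phi n (code_of_parity_check H) (rows (transpose_mat G * map_mat phi H)) p'"
    if "is_generator_matrix G m r (m - r + 1)" and "real (r - 1) / real m \<le> p'" for G :: "'b mat" and p'
    using field_hom.is_test_set_of_mds[OF ext, of H r n G m p'] H that m(1) r unfolding r_def by simp
  show ?thesis
    unfolding Let_def r_def[symmetric] Q_def[symmetric] m_def[symmetric]
    using m mds test by simp
qed

end
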